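(* Let $f,g$ satisfy (H1) and (H2) (see context). Let $(\gamma_n)_{n\ge1}$ be positive non-increasing stepsizes with $\gamma_n\in(0,1/L]$, $\theta_0\in\mathrm{Dom}(g)$, and $\theta_{n+1}=\mathrm{Prox}_{\gamma_{n+1}}(\theta_n-\gamma_{n+1}H_{n+1})$ with $H_{n+1}$ $\Theta$-valued random variables. Let $\eta_{n+1}=H_{n+1}-\nabla f(\theta_n)$, $\mathcal F_n=\sigma(\theta_0,H_1,\dots,H_n)$, $\epsilon^{(1)}_n=\|\mathbb E[\eta_{n+1}\mid\mathcal F_n]\|$, $\epsilon^{(2)}_n=\mathbb E[\|\eta_{n+1}\|^2\mid\mathcal F_n]$. Let $(a_n)_{n\ge1}$ be non-negative with $A_n=\sum_{k=1}^na_k$, and assume $(a_n/\gamma_n)_{n\ge1}$ is non-decreasing and there is a constant $B$ with $\mathbb P(\sup_n\|\theta_n\|\le B)=1$. Then for any minimizer $\theta_\star$ of $F$, with $B_\star=B+\|\theta_\star\|$, $$\frac1{A_n}\sum_{k=1}^na_k\mathbb E[F(\theta_k)]-F(\theta_\star)\le\frac{B_\star^2a_n}{2\gamma_nA_n}+\frac1{A_n}\sum_{k=1}^na_k\big\{B_\star\mathbb E[\epsilon^{(1)}_{k-1}]+\gamma_k\mathbb E[\epsilon^{(2)}_{k-1}]\big\}.$$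
   Context: $\Theta$ is a finite-dimensional Euclidean space with norm $\|\cdot\|$. (H1): $g:\Theta\to(-\infty,+\infty]$ convex, not identically $+\infty$, lower semicontinuous; $f:\Theta\to\mathbb R$ continuously differentiable with $L$-Lipschitz gradient. (H2): $f$ convex and $\mathrm{argmin}_\Theta F\ne\emptyset$, $F=f+g$. $\mathrm{Dom}(g)=\{\theta:|g(\theta)|<\infty\}$; $\mathrm{Prox}_\gamma(\theta)=\mathrm{argmin}_{\vartheta}\{g(\vartheta)+\frac1{2\gamma}\|\vartheta-\theta\|^2\}$. *)

theory Defs
  imports "HOL-Analysis.Analysis" "HOL-Probability.Probability"
begin

definition ereal_convex :: "('a::real_vector \<Rightarrow> ereal) \<Rightarrow> bool" where
  "ereal_convex g \<longleftrightarrow> (\<forall>x y u. 0 \<le> u \<and> u \<le> 1 \<longrightarrow>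
      g ((1 - u) *\<^sub>R x + u *\<^sub>R y) \<le> ereal (1 - u) * g x + ereal u * g y)"

definition lsc :: "('a::topological_space \<Rightarrow> ereal) \<Rightarrow> bool" where
  "lsc g \<longleftrightarrow> (\<forall>c. closed {x. g x \<le> c})"

definition Dom :: "('a \<Rightarrow> ereal) \<Rightarrow> 'a set" where
  "Dom g = {x. \<bar>g x\<bar> < \<infinity>}"

definition Prox :: "('a::real_normed_vector \<Rightarrow> ereal) \<Rightarrow> real \<Rightarrow> 'a \<Rightarrow> 'a set" where
  "Prox g \<gamma> x = {v. \<forall>w. g v + ereal (norm (v - x)^2 / (2 * \<gamma>)) \<le> g w + ereal (norm (w - x)^2 / (2 * \<gamma>))}"

definition nat_filtration ::
  "'b measure \<Rightarrow> ('b \<Rightarrow> 'a::topological_space) \<Rightarrow> (nat \<Rightarrow> 'b \<Rightarrow> 'a) \<Rightarrow> nat \<Rightarrow> 'b measure" where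
  "nat_filtration M X0 H n = sigma (space M)
     ({X0 -` A \<inter> space M | A. A \<in> sets borel} \<union>
      (\<Union>i\<in>{1..n}. {H i -` A \<inter> space M | A. A \<in> sets borel}))"

definition vcond_exp ::
  "'b measure \<Rightarrow> 'b measure \<Rightarrow> ('b \<Rightarrow> 'a::euclidean_space) \<Rightarrow> 'b \<Rightarrow> 'a" where
  "vcond_exp M F X = (\<lambda>\<omega>. \<Sum>b\<in>Basis. real_cond_exp M F (\<lambda>\<omega>'. X \<omega>' \<bullet> b) \<omega> *\<^sub>R b)"

definition ereal_expectation :: "'b measure \<Rightarrow> ('b \<Rightarrow> ereal) \<Rightarrow> ereal" where
  "ereal_expectation M X =
     enn2ereal (\<integral>\<^sup>+\<omega>. e2ennreal (X \<omega>) \<partial>M) - enn2ereal (\<integral>\<^sup>+\<omega>. e2ennreal (- X \<omega>) \<partial>M)"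

end

theory Submission
  imports Defs
begin

text \<open>Write \<open>p\<^sub>k\<close> for the exact proximal gradient step
  \<open>Prox\<^sub>\<gamma>\<^sub>k\<^sub>+\<^sub>1(\<theta>\<^sub>k - \<gamma>\<^sub>k\<^sub>+\<^sub>1 \<nabla>f(\<theta>\<^sub>k))\<close>. Pathwise, the three-point property of the
  prox, the descent lemma (valid as \<open>\<gamma> \<le> 1/L\<close>), convexity of \<open>f\<close> and nonexpansiveness of the
  prox give
  \<open>F(\<theta>\<^sub>k\<^sub>+\<^sub>1) \<le> F(\<theta>\<^sub>\<star>) + (|\<theta>\<^sub>k - \<theta>\<^sub>\<star>|\<^sup>2 - |\<theta>\<^sub>k\<^sub>+\<^sub>1 - \<theta>\<^sub>\<star>|\<^sup>2) / (2\<gamma>\<^sub>k\<^sub>+\<^sub>1)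
     + \<langle>\<theta>\<^sub>\<star> - p\<^sub>k, \<eta>\<^sub>k\<^sub>+\<^sub>1\<rangle> + \<gamma>\<^sub>k\<^sub>+\<^sub>1 |\<eta>\<^sub>k\<^sub>+\<^sub>1|\<^sup>2\<close>.
  The point \<open>p\<^sub>k\<close> is \<open>\<F>\<^sub>k\<close>-measurable and, being a proximal gradient step from \<open>\<theta>\<^sub>k\<close>, no farther
  from the minimizer than \<open>\<theta>\<^sub>k\<close>, so \<open>|\<theta>\<^sub>\<star> - p\<^sub>k| \<le> B\<^sub>\<star>\<close>; in expectation the inner product becomes
  \<open>\<langle>\<theta>\<^sub>\<star> - p\<^sub>k, E[\<eta>\<^sub>k\<^sub>+\<^sub>1 | \<F>\<^sub>k]\<rangle> \<le> B\<^sub>\<star> \<epsilon>\<^sup>(\<^sup>1\<^sup>)\<^sub>k\<close>. Multiplying by \<open>a\<^sub>k\<^sub>+\<^sub>1\<close> and summing, the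
  distance terms telescope to at most \<open>B\<^sub>\<star>\<^sup>2 a\<^sub>n / (2\<gamma>\<^sub>n)\<close> because \<open>a\<^sub>k/\<gamma>\<^sub>k\<close> is nondecreasing.\<close>

section \<open>Smooth convex functions\<close>

lemma has_real_derivative_along_line:
  fixes f :: "'a::real_inner \<Rightarrow> real"
  assumes "\<forall>x. (f has_derivative (\<lambda>h. gradf x \<bullet> h)) (at x)"
  shows "((\<lambda>t. f (x + t *\<^sub>R d)) has_real_derivative (gradf (x + t *\<^sub>R d) \<bullet> d)) (at t)"
proof -
  have "((\<lambda>t::real. x + t *\<^sub>R d) has_derivative (\<lambda>s. s *\<^sub>R d)) (at t)"
    by (auto intro!: derivative_eq_intros)
  from has_derivative_compose[OF this assms[rule_format, of "x + t *\<^sub>R d"]]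
  show ?thesis
    unfolding has_field_derivative_def by (rule has_derivative_eq_rhs) (auto simp: fun_eq_iff)
qed

lemma convex_on_gradient_inequality:
  fixes f :: "'a::real_inner \<Rightarrow> real"
  assumes "convex_on UNIV f" and "\<forall>x. (f has_derivative (\<lambda>h. gradf x \<bullet> h)) (at x)"
  shows "f x + gradf x \<bullet> (y - x) \<le> f y"
proof -
  define \<phi> where "\<phi> t = f (x + t *\<^sub>R (y - x))" for t :: real
  have "convex_on UNIV \<phi>"
  proof (rule convex_onI)
    fix t s u :: real assume "0 < t" "t < 1"
    have "\<phi> ((1 - t) *\<^sub>R s + t *\<^sub>R u) = f ((1 - t) *\<^sub>R (x + s *\<^sub>R (y - x)) + t *\<^sub>R (x + u *\<^sub>R (y - x)))"
      unfolding \<phi>_def by (simp add: algebra_simps)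
    also have "\<dots> \<le> (1 - t) * \<phi> s + t * \<phi> u"
      unfolding \<phi>_def using convex_onD[OF assms(1), of t] \<open>0 < t\<close> \<open>t < 1\<close> by simp
    finally show "\<phi> ((1 - t) *\<^sub>R s + t *\<^sub>R u) \<le> (1 - t) * \<phi> s + t * \<phi> u" .
  qed simp
  moreover have "(\<phi> has_field_derivative (gradf x \<bullet> (y - x))) (at 0 within UNIV)"
    unfolding \<phi>_def using has_real_derivative_along_line[OF assms(2), of x "y - x" 0] by simp
  ultimately have "\<phi> 1 - \<phi> 0 \<ge> (gradf x \<bullet> (y - x)) * (1 - 0)"
    by (intro convex_on_imp_above_tangent[where A=UNIV]) auto
  then show ?thesis unfolding \<phi>_def by simp
qed

lemma descent_lemma:
  fixes f :: "'a::real_inner \<Rightarrow> real"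
  assumes "\<forall>x. (f has_derivative (\<lambda>h. gradf x \<bullet> h)) (at x)"
    and "\<forall>x y. norm (gradf x - gradf y) \<le> L * norm (x - y)"
  shows "f y \<le> f x + gradf x \<bullet> (y - x) + L / 2 * (norm (y - x))\<^sup>2"
proof -
  define d where "d = y - x"
  define \<psi> where "\<psi> t = f (x + t *\<^sub>R d) - t * (gradf x \<bullet> d) - L / 2 * t\<^sup>2 * (norm d)\<^sup>2" for t :: real
  define \<psi>' where "\<psi>' t = gradf (x + t *\<^sub>R d) \<bullet> d - gradf x \<bullet> d - L * t * (norm d)\<^sup>2" for t :: real
  have "DERIV \<psi> t :> \<psi>' t" for t
    unfolding \<psi>_def \<psi>'_def
    by (rule derivative_eq_intros has_real_derivative_along_line[OF assms(1)] refl | simp)+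
  then obtain z where z: "0 < z" "z < 1" "\<psi> 1 - \<psi> 0 = \<psi>' z"
    using MVT2[of 0 1 \<psi> \<psi>'] by auto
  have "gradf (x + z *\<^sub>R d) \<bullet> d - gradf x \<bullet> d = (gradf (x + z *\<^sub>R d) - gradf x) \<bullet> d"
    by (simp add: inner_diff_left)
  also have "\<dots> \<le> norm (gradf (x + z *\<^sub>R d) - gradf x) * norm d"
    by (rule norm_cauchy_schwarz)
  also have "\<dots> \<le> L * norm (z *\<^sub>R d) * norm d"
    using assms(2)[rule_format, of "x + z *\<^sub>R d" x] by (intro mult_right_mono) auto
  also have "\<dots> = L * z * (norm d)\<^sup>2" using z by (simp add: power2_eq_square)
  finally have "\<psi> 1 \<le> \<psi> 0" using z unfolding \<psi>'_def by simp
  then show ?thesis unfolding \<psi>_def d_def by simp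
qed

lemma le_of_forall_pos_le_add_mult:
  fixes a b c :: real
  assumes "\<And>t. 0 < t \<Longrightarrow> t \<le> 1 \<Longrightarrow> a \<le> b + t * c"
  shows "a \<le> b"
proof (rule field_le_epsilon)
  fix e :: real assume "0 < e"
  define t where "t = min 1 (e / (\<bar>c\<bar> + 1))"
  have t: "0 < t" "t \<le> 1" using \<open>0 < e\<close> by (auto simp: t_def)
  have "t * c \<le> t * (\<bar>c\<bar> + 1)" using t by (intro mult_left_mono) auto
  also have "\<dots> \<le> e / (\<bar>c\<bar> + 1) * (\<bar>c\<bar> + 1)"
    by (intro mult_right_mono) (auto simp: t_def)
  finally have "t * c \<le> e" by simp
  then show "a \<le> b + e" using assms[OF t] by simp
qed

lemma norm_add_scaleR_square:
  fixes a b :: "'a::real_inner"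
  shows "(norm (a + t *\<^sub>R b))\<^sup>2 = (norm a)\<^sup>2 + 2 * t * (a \<bullet> b) + t\<^sup>2 * (norm b)\<^sup>2"
  unfolding power2_norm_eq_inner
  by (simp add: inner_add_left inner_add_right algebra_simps power2_eq_square inner_commute)

section \<open>The proximal operator\<close>

locale proper_convex =
  fixes g :: "'a::euclidean_space \<Rightarrow> ereal"
  assumes proper: "\<exists>x. g x \<noteq> \<infinity>" and never_MInf: "\<forall>x. g x \<noteq> -\<infinity>"
    and convex: "ereal_convex g"
begin

lemma ereal_real_of_g: "g x \<noteq> \<infinity> \<Longrightarrow> ereal (real_of_ereal (g x)) = g x"
  using never_MInf by (cases "g x") auto

lemma Prox_not_PInf:
  assumes "v \<in> Prox g \<gamma> z"
  shows "g v \<noteq> \<infinity>"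
proof -
  obtain w where w: "g w \<noteq> \<infinity>" using proper by auto
  have "g v + ereal (norm (v - z)^2 / (2 * \<gamma>)) \<le> g w + ereal (norm (w - z)^2 / (2 * \<gamma>))"
    using assms unfolding Prox_def by auto
  moreover have "g w + ereal (norm (w - z)^2 / (2 * \<gamma>)) < \<infinity>" using w never_MInf by (cases "g w") auto
  ultimately show ?thesis by auto
qed

text \<open>Compare \<open>v\<close> with the points \<open>(1 - t) v + t w\<close> and let \<open>t \<rightarrow> 0\<close>.\<close>
lemma Prox_variational_inequality:
  assumes "0 < \<gamma>" "v \<in> Prox g \<gamma> z" "g w \<noteq> \<infinity>"
  shows "real_of_ereal (g v) + (z - v) \<bullet> (w - v) / \<gamma> \<le> real_of_ereal (g w)"
proof -
  define gv where "gv = real_of_ereal (g v)"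
  define gw where "gw = real_of_ereal (g w)"
  have gv: "g v = ereal gv" using ereal_real_of_g[OF Prox_not_PInf[OF assms(2)]] gv_def by simp
  have gw: "g w = ereal gw" using ereal_real_of_g[OF assms(3)] gw_def by simp
  have "gv \<le> gw + (v - z) \<bullet> (w - v) / \<gamma> + t * ((norm (w - v))\<^sup>2 / (2 * \<gamma>))"
    if t: "0 < t" "t \<le> 1" for t
  proof -
    define wt where "wt = (1 - t) *\<^sub>R v + t *\<^sub>R w"
    have "g wt \<le> ereal (1 - t) * g v + ereal t * g w"
      using convex t unfolding ereal_convex_def wt_def by auto
    then have gwt: "g wt \<le> ereal ((1 - t) * gv + t * gw)" by (simp add: gv gw)
    have "g v + ereal (norm (v - z)^2 / (2 * \<gamma>)) \<le> g wt + ereal (norm (wt - z)^2 / (2 * \<gamma>))"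
      using assms(2) unfolding Prox_def by auto
    also have "\<dots> \<le> ereal ((1 - t) * gv + t * gw) + ereal (norm (wt - z)^2 / (2 * \<gamma>))"
      using gwt by (rule add_right_mono)
    finally have "gv + norm (v - z)^2 / (2 * \<gamma>) \<le> (1 - t) * gv + t * gw + norm (wt - z)^2 / (2 * \<gamma>)"
      by (simp add: gv)
    moreover have "wt - z = (v - z) + t *\<^sub>R (w - v)" unfolding wt_def by (simp add: algebra_simps)
    ultimately have "gv + norm (v - z)^2 / (2 * \<gamma>) \<le> (1 - t) * gv + t * gw +
        ((norm (v - z))\<^sup>2 + 2 * t * ((v - z) \<bullet> (w - v)) + t\<^sup>2 * (norm (w - v))\<^sup>2) / (2 * \<gamma>)"
      using norm_add_scaleR_square by metis
    then have "t * gv \<le> t * (gw + (v - z) \<bullet> (w - v) / \<gamma> + t * ((norm (w - v))\<^sup>2 / (2 * \<gamma>)))"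
      using assms(1) by (simp add: field_simps power2_eq_square)
    then show ?thesis using t by (simp add: mult_le_cancel_left_pos)
  qed
  then have "gv \<le> gw + (v - z) \<bullet> (w - v) / \<gamma>"
    by (rule le_of_forall_pos_le_add_mult)
  moreover have "(z - v) \<bullet> (w - v) = - ((v - z) \<bullet> (w - v))" by (metis inner_minus_left minus_diff_eq)
  ultimately show ?thesis unfolding gv_def[symmetric] gw_def[symmetric] by simp
qed

lemma Prox_three_point:
  assumes "0 < \<gamma>" "v \<in> Prox g \<gamma> z" "g w \<noteq> \<infinity>"
  shows "real_of_ereal (g v) + (norm (v - z))\<^sup>2 / (2 * \<gamma>) + (norm (w - v))\<^sup>2 / (2 * \<gamma>)
        \<le> real_of_ereal (g w) + (norm (w - z))\<^sup>2 / (2 * \<gamma>)"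
proof -
  have "(norm (w - z))\<^sup>2 = (norm (w - v))\<^sup>2 + 2 * ((w - v) \<bullet> (v - z)) + (norm (v - z))\<^sup>2"
    using norm_add_scaleR_square[of "w - v" 1 "v - z"] by simp
  moreover have "(w - v) \<bullet> (v - z) = - ((z - v) \<bullet> (w - v))"
    by (simp add: inner_commute inner_diff_left inner_diff_right)
  ultimately have "(norm (w - z))\<^sup>2 / (2 * \<gamma>)
      = (norm (w - v))\<^sup>2 / (2 * \<gamma>) + (norm (v - z))\<^sup>2 / (2 * \<gamma>) - (z - v) \<bullet> (w - v) / \<gamma>"
    by (simp add: add_divide_distrib diff_divide_distrib)
  then show ?thesis using Prox_variational_inequality[OF assms] by linarith
qed

lemma Prox_unique:
  assumes "0 < \<gamma>" "v1 \<in> Prox g \<gamma> z" "v2 \<in> Prox g \<gamma> z"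
  shows "v1 = v2"
proof -
  have fin: "g v1 \<noteq> \<infinity>" "g v2 \<noteq> \<infinity>" using Prox_not_PInf assms by auto
  have "g v2 + ereal (norm (v2 - z)^2 / (2 * \<gamma>)) \<le> g v1 + ereal (norm (v1 - z)^2 / (2 * \<gamma>))"
    using assms(2,3) unfolding Prox_def by auto
  then have "real_of_ereal (g v2) + norm (v2 - z)^2 / (2 * \<gamma>) \<le> real_of_ereal (g v1) + norm (v1 - z)^2 / (2 * \<gamma>)"
    using ereal_real_of_g[OF fin(1)] ereal_real_of_g[OF fin(2)] by (metis plus_ereal.simps(1) ereal_less_eq(3))
  with Prox_three_point[OF assms(1,2) fin(2)] have "(norm (v2 - v1))\<^sup>2 / (2 * \<gamma>) \<le> 0" by simp
  then show ?thesis using assms(1) by (simp add: divide_le_0_iff)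
qed

lemma Prox_nonexpansive:
  assumes "0 < \<gamma>" "v1 \<in> Prox g \<gamma> z1" "v2 \<in> Prox g \<gamma> z2"
  shows "norm (v1 - v2) \<le> norm (z1 - z2)"
proof -
  have "(z1 - v1) \<bullet> (v2 - v1) / \<gamma> + (z2 - v2) \<bullet> (v1 - v2) / \<gamma> \<le> 0"
    using Prox_variational_inequality[OF assms(1,2) Prox_not_PInf[OF assms(3)]]
      Prox_variational_inequality[OF assms(1,3) Prox_not_PInf[OF assms(2)]] by simp
  then have "(z1 - v1) \<bullet> (v2 - v1) + (z2 - v2) \<bullet> (v1 - v2) \<le> 0"
    using assms(1) by (simp add: add_divide_distrib[symmetric] divide_le_0_iff)
  moreover have "(z1 - v1) \<bullet> (v2 - v1) + (z2 - v2) \<bullet> (v1 - v2) = (norm (v1 - v2))\<^sup>2 - (z1 - z2) \<bullet> (v1 - v2)"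
    by (simp add: power2_norm_eq_inner inner_diff_left inner_diff_right inner_commute algebra_simps)
  ultimately have "(norm (v1 - v2))\<^sup>2 \<le> (z1 - z2) \<bullet> (v1 - v2)" by simp
  also have "\<dots> \<le> norm (z1 - z2) * norm (v1 - v2)" by (rule norm_cauchy_schwarz)
  finally show ?thesis
    by (cases "norm (v1 - v2) = 0") (auto simp: power2_eq_square mult_le_cancel_right)
qed

end

lemma sublevel_add_ereal_eq_INT:
  fixes g :: "'a \<Rightarrow> ereal"
  shows "{x. g x + ereal (q x) \<le> ereal c} = (\<Inter>s. {x. g x \<le> ereal s} \<union> {x. q x \<le> c - s})"
proof (intro set_eqI iffI)
  fix x assume "x \<in> {x. g x + ereal (q x) \<le> ereal c}"
  then have "g x \<le> ereal (c - q x)" by (cases "g x") auto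
  then have "g x \<le> ereal s \<or> q x \<le> c - s" for s
    by (metis ereal_less_eq(3) le_diff_eq add.commute linorder_le_cases order_trans)
  then show "x \<in> (\<Inter>s. {x. g x \<le> ereal s} \<union> {x. q x \<le> c - s})" by blast
next
  fix x assume x: "x \<in> (\<Inter>s. {x. g x \<le> ereal s} \<union> {x. q x \<le> c - s})"
  show "x \<in> {x. g x + ereal (q x) \<le> ereal c}"
  proof (cases "g x")
    case (real gx)
    have "q x \<le> c - gx + e" if "0 < e" for e
    proof -
      have "x \<in> {x. g x \<le> ereal (gx - e)} \<union> {x. q x \<le> c - (gx - e)}" using x by blast
      then show ?thesis using real that by simp
    qed
    then have "q x \<le> c - gx" by (rule field_le_epsilon)
    then show ?thesis using real by simp
  next
    case PInf
    have "x \<in> {x. g x \<le> ereal (c - q x + 1)} \<union> {y. q y \<le> c - (c - q x + 1)}"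
      using x by blast
    then show ?thesis using PInf by simp
  qed simp
qed

lemma lsc_add_continuous:
  fixes g :: "'a::topological_space \<Rightarrow> ereal"
  assumes "lsc g" "continuous_on UNIV q"
  shows "lsc (\<lambda>x. g x + ereal (q x))"
  unfolding lsc_def
proof
  fix c :: ereal
  show "closed {x. g x + ereal (q x) \<le> c}"
  proof (cases c)
    case (real c')
    have "closed {x. q x \<le> c' - s}" for s
      using closed_Collect_le[OF assms(2) continuous_on_const] by simp
    then show ?thesis
      using assms(1) unfolding lsc_def real sublevel_add_ereal_eq_INT by (auto intro!: closed_INT)
  next
    case MInf
    have "(g x + ereal (q x) \<le> c) = (g x \<le> -\<infinity>)" for x using MInf by (cases "g x") auto
    moreover have "closed {x. g x \<le> -\<infinity>}" using assms(1) unfolding lsc_def by blast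
    ultimately show ?thesis by simp
  qed simp
qed

lemma borel_measurable_lsc:
  fixes g :: "'a::topological_space \<Rightarrow> ereal"
  assumes "lsc g"
  shows "g \<in> borel_measurable borel"
  by (rule borel_measurableI_le) (use assms in \<open>simp add: lsc_def\<close>)

lemma lsc_attains_min_on_compact:
  fixes \<Phi> :: "'a::topological_space \<Rightarrow> ereal"
  assumes "lsc \<Phi>" "compact K" "K \<noteq> {}"
  obtains v where "v \<in> K" "\<And>w. w \<in> K \<Longrightarrow> \<Phi> v \<le> \<Phi> w"
proof -
  define m where "m = (INF w\<in>K. \<Phi> w)"
  have "K \<inter> (\<Inter>t\<in>{m<..}. {x. \<Phi> x \<le> t}) \<noteq> {}"
  proof (rule compact_imp_fip_image[OF assms(2)])
    show "closed {x. \<Phi> x \<le> t}" for t using assms(1) unfolding lsc_def by auto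
    fix T assume T: "finite T" "T \<subseteq> {m<..}"
    show "K \<inter> (\<Inter>t\<in>T. {x. \<Phi> x \<le> t}) \<noteq> {}"
    proof (cases "T = {}")
      case False
      then have "m < Min T" using T by (auto simp: Min_gr_iff)
      then obtain x where x: "x \<in> K" "\<Phi> x < Min T" unfolding m_def by (auto simp: INF_less_iff)
      have "\<Phi> x \<le> t" if "t \<in> T" for t
        using Min_le[OF T(1) that] x(2) by (meson less_le_trans less_imp_le)
      then show ?thesis using x(1) by blast
    qed (use assms(3) in simp)
  qed
  then obtain v where v: "v \<in> K" "\<And>t. m < t \<Longrightarrow> \<Phi> v \<le> t" by blast
  have "\<Phi> v \<le> m" by (rule dense_ge) (use v in auto)
  then show ?thesis using that v(1) unfolding m_def by (meson INF_lower order_trans)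
qed

lemma quadratic_sublevel_bounded:
  fixes s :: real
  assumes "0 < \<gamma>" "c - C * s + s\<^sup>2 / (2 * \<gamma>) \<le> D"
  shows "s \<le> max 1 (2 * \<gamma> * (C + \<bar>D - c\<bar>))"
proof (rule ccontr)
  assume "\<not> ?thesis"
  then have s: "1 < s" "2 * \<gamma> * (C + \<bar>D - c\<bar>) < s" by auto
  then have "\<bar>D - c\<bar> < s / (2 * \<gamma>) - C" using assms(1) by (simp add: field_simps)
  then have "1 * \<bar>D - c\<bar> < s * (s / (2 * \<gamma>) - C)"
    using s(1) by (intro mult_le_less_imp_less) auto
  also have "\<dots> = s\<^sup>2 / (2 * \<gamma>) - C * s" by (simp add: algebra_simps power2_eq_square)
  finally have "\<bar>D - c\<bar> < s\<^sup>2 / (2 * \<gamma>) - C * s" by simp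
  then show False using assms(2) abs_ge_self[of "D - c"] by linarith
qed

context proper_convex
begin

lemma lsc_convex_lower_bound:
  assumes "lsc g" and w0: "g w0 = ereal c0"
  obtains r where "0 < r" "\<And>x. ereal (c0 - 1 - 2 * norm (x - w0) / r) \<le> g x"
proof -
  have "open (- {x. g x \<le> ereal (c0 - 1)})" using assms(1) unfolding lsc_def by auto
  moreover have "w0 \<in> - {x. g x \<le> ereal (c0 - 1)}" using w0 by simp
  ultimately obtain r where r: "0 < r" "ball w0 r \<subseteq> - {x. g x \<le> ereal (c0 - 1)}"
    unfolding open_contains_ball by blast
  have near: "ereal (c0 - 1) < g y" if "norm (y - w0) < r" for y
    using r(2) that by (auto simp: dist_norm norm_minus_commute)
  have "ereal (c0 - 1 - 2 * norm (x - w0) / r) \<le> g x" for x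
  proof (cases "norm (x - w0) < r")
    case True
    have "ereal (c0 - 1 - 2 * norm (x - w0) / r) \<le> ereal (c0 - 1)" using r(1) by simp
    then show ?thesis using near[OF True] by (meson order.trans less_imp_le)
  next
    case False
    text \<open>The point \<open>y\<close> at distance \<open>r/2\<close> from \<open>w0\<close> towards \<open>x\<close> has \<open>g y > c0 - 1\<close>;
      convexity along the segment transfers this to \<open>x\<close> with slope \<open>2/r\<close>.\<close>
    define d where "d = norm (x - w0)"
    have d: "r \<le> d" "0 < d" using False r(1) d_def by auto
    define t where "t = r / (2 * d)"
    have t: "0 < t" "t \<le> 1" using d r(1) by (auto simp: t_def field_simps)
    define y where "y = (1 - t) *\<^sub>R w0 + t *\<^sub>R x"
    have "y - w0 = t *\<^sub>R (x - w0)" by (simp add: y_def algebra_simps)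
    then have "norm (y - w0) = t * d" using t by (simp add: d_def)
    also have "\<dots> < r" using d r(1) by (simp add: t_def)
    finally have gy: "ereal (c0 - 1) < g y" by (rule near)
    have conv: "g y \<le> ereal (1 - t) * g w0 + ereal t * g x"
      using convex t unfolding ereal_convex_def y_def by auto
    show ?thesis
    proof (cases "g x")
      case (real gx)
      have "g y \<le> ereal ((1 - t) * c0 + t * gx)" using conv by (simp add: w0 real)
      with gy have "c0 - 1 < (1 - t) * c0 + t * gx" by (metis less_le_trans less_ereal.simps(1))
      then have "c0 - 1 / t < gx" using t by (simp add: field_simps)
      moreover have "1 / t = 2 * d / r" using d r(1) by (simp add: t_def)
      ultimately show ?thesis using real by (simp add: d_def)
    qed (use never_MInf in auto)
  qed
  then show ?thesis using r(1) that by blast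
qed

lemma lsc_convex_minorant:
  assumes "lsc g"
  obtains c C where "\<And>x. ereal (c - C * norm (x - z)) \<le> g x"
proof -
  obtain w0 where "g w0 \<noteq> \<infinity>" using proper by auto
  then obtain c0 where w0: "g w0 = ereal c0" using never_MInf by (cases "g w0") auto
  obtain r where r: "0 < r" "\<And>x. ereal (c0 - 1 - 2 * norm (x - w0) / r) \<le> g x"
    using lsc_convex_lower_bound[OF assms w0] by blast
  have bound: "ereal (c0 - 1 - 2 * norm (z - w0) / r - 2 / r * norm (x - z)) \<le> g x" for x
  proof -
    have "norm (x - w0) \<le> norm (x - z) + norm (z - w0)"
      using norm_diff_triangle_le[of x z "norm (x - z)" w0 "norm (z - w0)"] by simp
    then have "2 * norm (x - w0) / r \<le> 2 * norm (z - w0) / r + 2 / r * norm (x - z)"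
      using r(1) by (simp add: field_simps)
    then have "ereal (c0 - 1 - 2 * norm (z - w0) / r - 2 / r * norm (x - z))
        \<le> ereal (c0 - 1 - 2 * norm (x - w0) / r)" by simp
    then show ?thesis using r(2)[of x] by (rule order_trans)
  qed
  then show ?thesis by (rule that)
qed

lemma Prox_nonempty:
  assumes "lsc g" "0 < \<gamma>"
  shows "\<exists>v. v \<in> Prox g \<gamma> z"
proof -
  define \<Phi> where "\<Phi> x = g x + ereal ((norm (x - z))\<^sup>2 / (2 * \<gamma>))" for x
  have lsc: "lsc \<Phi>" unfolding \<Phi>_def
    by (intro lsc_add_continuous assms(1) continuous_intros) (use assms(2) in auto)
  obtain w0 where "g w0 \<noteq> \<infinity>" using proper by auto
  then obtain \<Phi>0 where \<Phi>0: "\<Phi> w0 = ereal \<Phi>0" using never_MInf unfolding \<Phi>_def by (cases "g w0") auto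
  obtain c C where minorant: "\<And>x. ereal (c - C * norm (x - z)) \<le> g x"
    using lsc_convex_minorant[OF assms(1)] by blast
  define K where "K = {x. \<Phi> x \<le> \<Phi> w0}"
  have "K \<subseteq> cball z (max 1 (2 * \<gamma> * (C + \<bar>\<Phi>0 - c\<bar>)))"
  proof
    fix x assume "x \<in> K"
    have "ereal (c - C * norm (x - z)) + ereal ((norm (x - z))\<^sup>2 / (2 * \<gamma>)) \<le> \<Phi> x"
      unfolding \<Phi>_def by (rule add_right_mono[OF minorant])
    also have "\<Phi> x \<le> ereal \<Phi>0" using \<open>x \<in> K\<close> \<Phi>0 by (simp add: K_def)
    finally have "c - C * norm (x - z) + (norm (x - z))\<^sup>2 / (2 * \<gamma>) \<le> \<Phi>0" by simp
    then show "x \<in> cball z (max 1 (2 * \<gamma> * (C + \<bar>\<Phi>0 - c\<bar>)))"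
      using quadratic_sublevel_bounded[OF assms(2)] by (simp add: dist_norm norm_minus_commute)
  qed
  moreover have "closed K" using lsc unfolding lsc_def K_def by auto
  ultimately have "compact K" by (meson bounded_cball bounded_subset compact_eq_bounded_closed)
  moreover have "K \<noteq> {}" by (auto simp: K_def)
  ultimately obtain v where v: "v \<in> K" "\<And>w. w \<in> K \<Longrightarrow> \<Phi> v \<le> \<Phi> w"
    using lsc_attains_min_on_compact[OF lsc] by blast
  have "\<Phi> v \<le> \<Phi> w" for w
    using v by (cases "w \<in> K") (auto simp: K_def intro: order.trans[of _ "\<Phi> w0"])
  then show ?thesis unfolding Prox_def \<Phi>_def by auto
qed

end

section \<open>Proximal gradient steps\<close>

locale convex_composite = proper_convex g for g :: "'a::euclidean_space \<Rightarrow> ereal" +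
  fixes f :: "'a \<Rightarrow> real" and gradf :: "'a \<Rightarrow> 'a" and L :: real
  assumes f_grad: "\<forall>x. (f has_derivative (\<lambda>h. gradf x \<bullet> h)) (at x)"
    and L_pos: "0 < L"
    and gradf_lip: "\<forall>x y. norm (gradf x - gradf y) \<le> L * norm (x - y)"
    and f_convex: "convex_on UNIV f"
    and g_lsc: "lsc g"
begin

definition prox :: "real \<Rightarrow> 'a \<Rightarrow> 'a" where
  "prox \<gamma> z = (THE v. v \<in> Prox g \<gamma> z)"

lemma prox_eq:
  assumes "0 < \<gamma>" "v \<in> Prox g \<gamma> z"
  shows "prox \<gamma> z = v"
  unfolding prox_def
  by (rule the_equality[where P = "\<lambda>v. v \<in> Prox g \<gamma> z", OF assms(2)])
    (rule Prox_unique[OF assms(1) _ assms(2)])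

lemma prox_in_Prox: "0 < \<gamma> \<Longrightarrow> prox \<gamma> z \<in> Prox g \<gamma> z"
  using Prox_nonempty[OF g_lsc] prox_eq by metis

lemma prox_nonexpansive: "0 < \<gamma> \<Longrightarrow> norm (prox \<gamma> z1 - prox \<gamma> z2) \<le> norm (z1 - z2)"
  using Prox_nonexpansive prox_in_Prox by blast

lemma continuous_on_prox: "0 < \<gamma> \<Longrightarrow> continuous_on UNIV (prox \<gamma>)"
  by (intro lipschitz_on_continuous_on[of 1] lipschitz_onI)
    (auto simp: dist_norm intro: prox_nonexpansive)

lemma continuous_on_gradf: "continuous_on UNIV gradf"
  by (intro lipschitz_on_continuous_on[of L] lipschitz_onI)
    (use gradf_lip L_pos in \<open>auto simp: dist_norm\<close>)

lemma continuous_on_f: "continuous_on UNIV f"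
  using f_grad by (metis continuous_at_imp_continuous_on has_derivative_continuous)

definition F :: "'a \<Rightarrow> real" where
  "F x = f x + real_of_ereal (g x)"

lemma minimizer_not_PInf:
  assumes "\<forall>y. ereal (f s) + g s \<le> ereal (f y) + g y"
  shows "g s \<noteq> \<infinity>"
proof
  assume "g s = \<infinity>"
  obtain y where "g y \<noteq> \<infinity>" using proper by auto
  then show False using assms[rule_format, of y] \<open>g s = \<infinity>\<close> never_MInf by (cases "g y") auto
qed

lemma ereal_F: "g x \<noteq> \<infinity> \<Longrightarrow> ereal (f x) + g x = ereal (F x)"
  unfolding F_def using ereal_real_of_g by (metis plus_ereal.simps(1))

text \<open>Three-point property of the prox, descent lemma at \<open>x\<close> (using \<open>\<gamma> \<le> 1/L\<close>) and the
  gradient inequality of \<open>f\<close> between \<open>x\<close> and \<open>w\<close>.\<close>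
lemma prox_grad_step_inequality:
  assumes \<gamma>: "0 < \<gamma>" "\<gamma> \<le> 1 / L" and v: "v \<in> Prox g \<gamma> (x - \<gamma> *\<^sub>R h)" and w: "g w \<noteq> \<infinity>"
  shows "F v \<le> F w + ((norm (x - w))\<^sup>2 - (norm (v - w))\<^sup>2) / (2 * \<gamma>) + (w - v) \<bullet> (h - gradf x)"
proof -
  define z where "z = x - \<gamma> *\<^sub>R h"
  have three_point: "real_of_ereal (g v) + (norm (v - z))\<^sup>2 / (2 * \<gamma>) + (norm (w - v))\<^sup>2 / (2 * \<gamma>)
        \<le> real_of_ereal (g w) + (norm (w - z))\<^sup>2 / (2 * \<gamma>)"
    using Prox_three_point[OF \<gamma>(1) v[folded z_def] w] .
  have expand: "(norm (u - z))\<^sup>2 / (2 * \<gamma>) = (norm (u - x))\<^sup>2 / (2 * \<gamma>) + (u - x) \<bullet> h + \<gamma> * (norm h)\<^sup>2 / 2"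
    for u
  proof -
    have "(norm (u - z))\<^sup>2 = (norm (u - x))\<^sup>2 + 2 * \<gamma> * ((u - x) \<bullet> h) + \<gamma>\<^sup>2 * (norm h)\<^sup>2"
      using norm_add_scaleR_square[of "u - x" \<gamma> h] by (simp add: z_def algebra_simps)
    moreover have "a / (2 * \<gamma>) = b / (2 * \<gamma>) + c + \<gamma> * d / 2"
      if "a = b + 2 * \<gamma> * c + \<gamma>\<^sup>2 * d" for a b c d :: real
      using that \<gamma>(1) by (simp add: field_simps power2_eq_square)
    ultimately show ?thesis by blast
  qed
  have descent: "f v \<le> f x + gradf x \<bullet> (v - x) + L / 2 * (norm (v - x))\<^sup>2"
    using descent_lemma[OF f_grad gradf_lip] .
  have "L \<le> 1 / \<gamma>" using \<gamma> L_pos by (simp add: field_simps)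
  then have "L / 2 * (norm (v - x))\<^sup>2 \<le> (1 / \<gamma>) / 2 * (norm (v - x))\<^sup>2"
    by (intro mult_right_mono) auto
  then have "L / 2 * (norm (v - x))\<^sup>2 \<le> (norm (v - x))\<^sup>2 / (2 * \<gamma>)" by simp
  moreover have "f x + gradf x \<bullet> (w - x) \<le> f w"
    by (rule convex_on_gradient_inequality[OF f_convex f_grad])
  moreover have "(w - v) \<bullet> (h - gradf x) = (w - x) \<bullet> h - (v - x) \<bullet> h - gradf x \<bullet> (w - x) + gradf x \<bullet> (v - x)"
    by (simp add: inner_diff_left inner_diff_right inner_commute)
  moreover have "((norm (x - w))\<^sup>2 - (norm (v - w))\<^sup>2) / (2 * \<gamma>)
      = (norm (w - x))\<^sup>2 / (2 * \<gamma>) - (norm (w - v))\<^sup>2 / (2 * \<gamma>)"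
    by (simp add: norm_minus_commute diff_divide_distrib)
  ultimately show ?thesis
    using three_point expand[of v] expand[of w] descent unfolding F_def by linarith
qed

lemma prox_grad_step_toward_minimizer:
  assumes \<gamma>: "0 < \<gamma>" "\<gamma> \<le> 1 / L"
    and s: "\<forall>y. ereal (f s) + g s \<le> ereal (f y) + g y"
  shows "norm (prox \<gamma> (x - \<gamma> *\<^sub>R gradf x) - s) \<le> norm (x - s)"
proof -
  define p where "p = prox \<gamma> (x - \<gamma> *\<^sub>R gradf x)"
  have p: "p \<in> Prox g \<gamma> (x - \<gamma> *\<^sub>R gradf x)" unfolding p_def by (rule prox_in_Prox[OF \<gamma>(1)])
  have gs: "g s \<noteq> \<infinity>" by (rule minimizer_not_PInf[OF s])
  have "ereal (F s) \<le> ereal (F p)"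
    using s[rule_format, of p] ereal_F[OF gs] ereal_F[OF Prox_not_PInf[OF p]] by simp
  moreover have "F p \<le> F s + ((norm (x - s))\<^sup>2 - (norm (p - s))\<^sup>2) / (2 * \<gamma>)"
    using prox_grad_step_inequality[OF \<gamma> p gs] by simp
  ultimately have "0 \<le> ((norm (x - s))\<^sup>2 - (norm (p - s))\<^sup>2) / (2 * \<gamma>)" by simp
  then have "(norm (p - s))\<^sup>2 \<le> (norm (x - s))\<^sup>2" using \<gamma>(1) by (simp add: zero_le_divide_iff)
  then show ?thesis unfolding p_def by (rule power2_le_imp_le) simp
qed

text \<open>The error term \<open>(w - v) \<bullet> \<eta>\<close> is split at the deterministic step \<open>p\<close>: the part
  \<open>(w - p) \<bullet> \<eta>\<close> is linear in the noise \<open>\<eta>\<close>, and \<open>|p - v| \<le> \<gamma> |\<eta>|\<close> by nonexpansiveness.\<close>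
lemma stochastic_prox_grad_step:
  assumes \<gamma>: "0 < \<gamma>" "\<gamma> \<le> 1 / L"
    and v: "v \<in> Prox g \<gamma> (x - \<gamma> *\<^sub>R h)"
    and w: "g w \<noteq> \<infinity>"
  shows "F v \<le> F w + ((norm (x - w))\<^sup>2 - (norm (v - w))\<^sup>2) / (2 * \<gamma>)
      + (w - prox \<gamma> (x - \<gamma> *\<^sub>R gradf x)) \<bullet> (h - gradf x) + \<gamma> * (norm (h - gradf x))\<^sup>2"
proof -
  define p where "p = prox \<gamma> (x - \<gamma> *\<^sub>R gradf x)"
  define \<eta> where "\<eta> = h - gradf x"
  have "norm (p - v) \<le> norm ((x - \<gamma> *\<^sub>R gradf x) - (x - \<gamma> *\<^sub>R h))"
    unfolding p_def prox_eq[OF \<gamma>(1) v, symmetric] by (rule prox_nonexpansive[OF \<gamma>(1)])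
  also have "\<dots> = \<gamma> * norm \<eta>" using \<gamma>(1) by (simp add: \<eta>_def algebra_simps flip: scaleR_diff_right)
  finally have "norm (p - v) * norm \<eta> \<le> \<gamma> * norm \<eta> * norm \<eta>" by (rule mult_right_mono) simp
  then have "(p - v) \<bullet> \<eta> \<le> \<gamma> * (norm \<eta>)\<^sup>2"
    using norm_cauchy_schwarz[of "p - v" \<eta>] by (simp add: power2_eq_square)
  moreover have "(w - v) \<bullet> \<eta> = (w - p) \<bullet> \<eta> + (p - v) \<bullet> \<eta>" by (simp add: inner_diff_left)
  ultimately show ?thesis
    using prox_grad_step_inequality[OF \<gamma> v w] unfolding p_def[symmetric] \<eta>_def[symmetric] by linarith
qed

end

section \<open>Filtrations, conditional expectations and expectations\<close>

lemma space_nat_filtration [simp]: "space (nat_filtration M X0 H n) = space M"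
  unfolding nat_filtration_def by (simp add: space_measure_of_conv)

lemma sets_nat_filtration:
  "sets (nat_filtration M X0 H n) = sigma_sets (space M)
     ({X0 -` A \<inter> space M | A. A \<in> sets borel} \<union>
      (\<Union>i\<in>{1..n}. {H i -` A \<inter> space M | A. A \<in> sets borel}))"
  unfolding nat_filtration_def by (subst sets_measure_of_conv) auto

lemma subalgebra_nat_filtration:
  assumes "X0 \<in> borel_measurable M" "\<And>i. 1 \<le> i \<Longrightarrow> i \<le> n \<Longrightarrow> H i \<in> borel_measurable M"
  shows "subalgebra M (nat_filtration M X0 H n)"
  unfolding subalgebra_def sets_nat_filtration
  using assms by (auto intro!: sets.sigma_sets_subset intro: measurable_sets)

lemma nat_filtration_mono:
  assumes "m \<le> n"
  shows "subalgebra (nat_filtration M X0 H n) (nat_filtration M X0 H m)"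
proof -
  have "(\<Union>i\<in>{1..m}. {H i -` A \<inter> space M | A. A \<in> sets borel})
      \<subseteq> (\<Union>i\<in>{1..n}. {H i -` A \<inter> space M | A. A \<in> sets borel})"
    using assms by (intro UN_mono) auto
  then show ?thesis unfolding subalgebra_def sets_nat_filtration
    by (intro conjI sigma_sets_mono' Un_mono order_refl) simp
qed

lemma measurable_nat_filtration_initial:
  fixes X0 :: "'b \<Rightarrow> 'a::topological_space"
  shows "X0 \<in> borel_measurable (nat_filtration M X0 H n)"
  by (rule measurableI) (auto simp: sets_nat_filtration)

lemma measurable_nat_filtration:
  fixes H :: "nat \<Rightarrow> 'b \<Rightarrow> 'a::topological_space"
  assumes "1 \<le> i" "i \<le> n"
  shows "H i \<in> borel_measurable (nat_filtration M X0 H n)"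
  by (rule measurableI) (use assms in \<open>auto simp: sets_nat_filtration\<close>)

context sigma_finite_subalgebra
begin

lemma integrable_vcond_exp:
  fixes X :: "'a \<Rightarrow> 'b::euclidean_space"
  assumes "integrable M X"
  shows "integrable M (vcond_exp M F X)"
  unfolding vcond_exp_def using assms
  by (intro Bochner_Integration.integrable_sum integrable_scaleR_left real_cond_exp_int(1)) auto

text \<open>Componentwise, this is the defining property of the real conditional expectation
  against the bounded \<open>F\<close>-measurable factor \<open>Z \<bullet> b\<close>.\<close>
lemma integral_inner_vcond_exp:
  fixes X Z :: "'a \<Rightarrow> 'b::euclidean_space"
  assumes X: "integrable M X"
    and Z: "Z \<in> borel_measurable F" "AE \<omega> in M. norm (Z \<omega>) \<le> C"
  shows "integrable M (\<lambda>\<omega>. Z \<omega> \<bullet> vcond_exp M F X \<omega>)"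
    and "(\<integral>\<omega>. Z \<omega> \<bullet> X \<omega> \<partial>M) = (\<integral>\<omega>. Z \<omega> \<bullet> vcond_exp M F X \<omega> \<partial>M)"
proof -
  have ZM: "Z \<in> borel_measurable M" by (rule measurable_from_subalg[OF subalg Z(1)])
  have ZF: "(\<lambda>\<omega>. Z \<omega> \<bullet> b) \<in> borel_measurable F" for b
    by (intro borel_measurable_inner Z(1) borel_measurable_const)
  have Xb: "(\<lambda>\<omega>. X \<omega> \<bullet> b) \<in> borel_measurable M" for b
    using X by (intro borel_measurable_inner borel_measurable_const) auto
  have prod_int: "integrable M (\<lambda>\<omega>. (Z \<omega> \<bullet> b) * (X \<omega> \<bullet> b))" if "b \<in> Basis" for b
  proof (rule Bochner_Integration.integrable_bound)
    show "integrable M (\<lambda>\<omega>. C * (X \<omega> \<bullet> b))" using X by (intro integrable_mult_right integrable_inner_left)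
    show "AE \<omega> in M. norm ((Z \<omega> \<bullet> b) * (X \<omega> \<bullet> b)) \<le> norm (C * (X \<omega> \<bullet> b))"
      using Z(2)
    proof eventually_elim
      case (elim \<omega>)
      have "\<bar>Z \<omega> \<bullet> b\<bar> \<le> \<bar>C\<bar>" using Basis_le_norm[OF that, of "Z \<omega>"] elim by simp
      then have "\<bar>Z \<omega> \<bullet> b\<bar> * \<bar>X \<omega> \<bullet> b\<bar> \<le> \<bar>C\<bar> * \<bar>X \<omega> \<bullet> b\<bar>" by (rule mult_right_mono) simp
      then show ?case by (simp add: abs_mult)
    qed
  qed (intro borel_measurable_times Xb borel_measurable_inner ZM borel_measurable_const)
  note cond = real_cond_exp_intg[OF prod_int ZF Xb]
  have unfold: "Z \<omega> \<bullet> vcond_exp M F X \<omega> = (\<Sum>b\<in>Basis. (Z \<omega> \<bullet> b) * real_cond_exp M F (\<lambda>\<omega>. X \<omega> \<bullet> b) \<omega>)"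
    for \<omega> unfolding vcond_exp_def by (simp add: inner_sum_right mult.commute)
  show "integrable M (\<lambda>\<omega>. Z \<omega> \<bullet> vcond_exp M F X \<omega>)"
    unfolding unfold by (intro Bochner_Integration.integrable_sum cond(1))
  have "(\<integral>\<omega>. Z \<omega> \<bullet> X \<omega> \<partial>M) = (\<integral>\<omega>. (\<Sum>b\<in>Basis. (Z \<omega> \<bullet> b) * (X \<omega> \<bullet> b)) \<partial>M)"
    by (rule Bochner_Integration.integral_cong[OF refl]) (rule euclidean_inner)
  also have "\<dots> = (\<Sum>b\<in>Basis. (\<integral>\<omega>. (Z \<omega> \<bullet> b) * (X \<omega> \<bullet> b) \<partial>M))"
    using prod_int by (rule Bochner_Integration.integral_sum)
  also have "\<dots> = (\<Sum>b\<in>Basis. (\<integral>\<omega>. (Z \<omega> \<bullet> b) * real_cond_exp M F (\<lambda>\<omega>. X \<omega> \<bullet> b) \<omega> \<partial>M))"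
    by (intro sum.cong refl cond(2)[symmetric])
  also have "\<dots> = (\<integral>\<omega>. Z \<omega> \<bullet> vcond_exp M F X \<omega> \<partial>M)"
    unfolding unfold by (intro Bochner_Integration.integral_sum[symmetric] cond(1))
  finally show "(\<integral>\<omega>. Z \<omega> \<bullet> X \<omega> \<partial>M) = (\<integral>\<omega>. Z \<omega> \<bullet> vcond_exp M F X \<omega> \<partial>M)" .
qed

lemma integral_inner_le_vcond_exp:
  fixes X Z :: "'a \<Rightarrow> 'b::euclidean_space"
  assumes X: "integrable M X"
    and Z: "Z \<in> borel_measurable F" "AE \<omega> in M. norm (Z \<omega>) \<le> C"
  shows "(\<integral>\<omega>. Z \<omega> \<bullet> X \<omega> \<partial>M) \<le> C * (\<integral>\<omega>. norm (vcond_exp M F X \<omega>) \<partial>M)"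
proof -
  have "(\<integral>\<omega>. Z \<omega> \<bullet> vcond_exp M F X \<omega> \<partial>M) \<le> (\<integral>\<omega>. C * norm (vcond_exp M F X \<omega>) \<partial>M)"
  proof (rule integral_mono_AE)
    show "integrable M (\<lambda>\<omega>. Z \<omega> \<bullet> vcond_exp M F X \<omega>)" by (rule integral_inner_vcond_exp(1)[OF assms])
    show "integrable M (\<lambda>\<omega>. C * norm (vcond_exp M F X \<omega>))"
      using integrable_vcond_exp[OF X] by (intro integrable_mult_right integrable_norm)
    show "AE \<omega> in M. Z \<omega> \<bullet> vcond_exp M F X \<omega> \<le> C * norm (vcond_exp M F X \<omega>)"
      using Z(2)
    proof eventually_elim
      case (elim \<omega>)
      have "Z \<omega> \<bullet> vcond_exp M F X \<omega> \<le> norm (Z \<omega>) * norm (vcond_exp M F X \<omega>)"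
        by (rule norm_cauchy_schwarz)
      also have "\<dots> \<le> C * norm (vcond_exp M F X \<omega>)" using elim by (rule mult_right_mono) simp
      finally show ?case .
    qed
  qed
  then show ?thesis using integral_inner_vcond_exp(2)[OF assms] by simp
qed

lemma nn_integral_nn_cond_exp:
  assumes "X \<in> borel_measurable M"
  shows "(\<integral>\<^sup>+\<omega>. nn_cond_exp M F X \<omega> \<partial>M) = (\<integral>\<^sup>+\<omega>. X \<omega> \<partial>M)"
  using nn_cond_exp_intg[of "\<lambda>_. 1" X] assms by simp

end

lemma enn2ereal_eq_ereal_enn2real: "x \<noteq> \<infinity> \<Longrightarrow> enn2ereal x = ereal (enn2real x)"
  by (cases x rule: ennreal_cases) auto

lemma ereal_expectation_eq_integral:
  fixes X :: "'b \<Rightarrow> real"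
  assumes "integrable M X" "\<And>\<omega>. \<omega> \<in> space M \<Longrightarrow> Y \<omega> = ereal (X \<omega>)"
  shows "ereal_expectation M Y = ereal (integral\<^sup>L M X)"
proof -
  have pos: "(\<integral>\<^sup>+\<omega>. e2ennreal (Y \<omega>) \<partial>M) = (\<integral>\<^sup>+\<omega>. ennreal (X \<omega>) \<partial>M)"
    and neg: "(\<integral>\<^sup>+\<omega>. e2ennreal (- Y \<omega>) \<partial>M) = (\<integral>\<^sup>+\<omega>. ennreal (- X \<omega>) \<partial>M)"
    by (auto intro!: nn_integral_cong simp: assms(2))
  have finite: "(\<integral>\<^sup>+\<omega>. ennreal (s * X \<omega>) \<partial>M) \<noteq> \<infinity>" if "\<bar>s\<bar> = 1" for s :: real
  proof -
    have "(\<integral>\<^sup>+\<omega>. ennreal (s * X \<omega>) \<partial>M) \<le> (\<integral>\<^sup>+\<omega>. ennreal (norm (X \<omega>)) \<partial>M)"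
      using that by (intro nn_integral_mono ennreal_leI) (metis abs_ge_self abs_mult mult_1 real_norm_def)
    also have "\<dots> < \<infinity>" using assms(1) by (simp add: integrable_iff_bounded)
    finally show ?thesis by simp
  qed
  show ?thesis
    unfolding ereal_expectation_def pos neg real_lebesgue_integral_def[OF assms(1)]
    using enn2ereal_eq_ereal_enn2real finite[of 1] finite[of "-1"] by simp
qed

section \<open>Weighted averages\<close>

lemma weighted_telescoping_le:
  fixes c d :: "nat \<Rightarrow> real"
  assumes "1 \<le> n" "\<And>k. 1 \<le> k \<Longrightarrow> 0 \<le> c k" "\<And>k. 1 \<le> k \<Longrightarrow> c k \<le> c (Suc k)"
    "\<And>k. d k \<le> D"
  shows "(\<Sum>k=1..n. c k * (d (k - 1) - d k)) \<le> c n * (D - d n)"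
  using assms(1)
proof (induction n rule: dec_induct)
  case base
  show ?case using assms(2)[of 1] assms(4)[of 0] by (simp add: mult_left_mono)
next
  case (step m)
  have "c m * (D - d m) \<le> c (Suc m) * (D - d m)"
    using assms(3)[of m] assms(4)[of m] step.hyps by (intro mult_right_mono) auto
  then show ?case using step.IH by (simp add: algebra_simps)
qed

lemma weighted_average_le:
  fixes a \<gamma> d I e :: "nat \<Rightarrow> real"
  assumes n: "1 \<le> n" and A: "0 < (\<Sum>k=1..n. a k)"
    and a: "\<And>k. 1 \<le> k \<Longrightarrow> 0 \<le> a k" and \<gamma>: "\<And>k. 1 \<le> k \<Longrightarrow> 0 < \<gamma> k"
    and mono: "\<And>k. 1 \<le> k \<Longrightarrow> a k / \<gamma> k \<le> a (Suc k) / \<gamma> (Suc k)"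
    and d: "\<And>k. 0 \<le> d k" "\<And>k. d k \<le> D"
    and step: "\<And>k. 1 \<le> k \<Longrightarrow> k \<le> n \<Longrightarrow> 0 < a k \<Longrightarrow> I k \<le> c + (d (k - 1) - d k) / (2 * \<gamma> k) + e k"
  shows "1 / (\<Sum>k=1..n. a k) * (\<Sum>k=1..n. a k * I k) - c
    \<le> D * a n / (2 * \<gamma> n * (\<Sum>k=1..n. a k)) + 1 / (\<Sum>k=1..n. a k) * (\<Sum>k=1..n. a k * e k)"
proof -
  define A where "A = (\<Sum>k=1..n. a k)"
  define w where "w k = a k / (2 * \<gamma> k)" for k
  have "a k * I k \<le> a k * c + w k * (d (k - 1) - d k) + a k * e k" if k: "k \<in> {1..n}" for k
  proof (cases "0 < a k")
    case True
    then have "a k * I k \<le> a k * (c + (d (k - 1) - d k) / (2 * \<gamma> k) + e k)"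
      using step k by (intro mult_left_mono) auto
    then show ?thesis by (simp add: w_def algebra_simps)
  next
    case False
    with a[of k] k have "a k = 0" by simp
    then show ?thesis by (simp add: w_def)
  qed
  then have "(\<Sum>k=1..n. a k * I k) \<le> (\<Sum>k=1..n. a k * c + w k * (d (k - 1) - d k) + a k * e k)"
    by (rule sum_mono)
  also have "\<dots> = A * c + (\<Sum>k=1..n. w k * (d (k - 1) - d k)) + (\<Sum>k=1..n. a k * e k)"
    by (simp add: A_def sum.distrib sum_distrib_right)
  finally have sum_le: "(\<Sum>k=1..n. a k * I k)
      \<le> A * c + (\<Sum>k=1..n. w k * (d (k - 1) - d k)) + (\<Sum>k=1..n. a k * e k)" .
  have "(\<Sum>k=1..n. w k * (d (k - 1) - d k)) \<le> w n * (D - d n)"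
  proof (rule weighted_telescoping_le[OF n _ _ d(2)])
    show "0 \<le> w k" if "1 \<le> k" for k using a[OF that] \<gamma>[OF that] by (simp add: w_def)
    show "w k \<le> w (Suc k)" if "1 \<le> k" for k
      using divide_right_mono[OF mono[OF that], of 2] by (simp add: w_def mult.commute)
  qed
  also have "w n * (D - d n) \<le> w n * D"
    using a[OF n] \<gamma>[OF n] d(1) by (intro mult_left_mono) (auto simp: w_def)
  finally have "(\<Sum>k=1..n. a k * I k) \<le> A * c + w n * D + (\<Sum>k=1..n. a k * e k)"
    using sum_le by linarith
  then have "(\<Sum>k=1..n. a k * I k) / A \<le> (A * c + w n * D + (\<Sum>k=1..n. a k * e k)) / A"
    using A unfolding A_def by (simp add: divide_right_mono)
  also have "\<dots> = c + D * a n / (2 * \<gamma> n * A) + (\<Sum>k=1..n. a k * e k) / A"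
    using A \<gamma>[OF n] unfolding A_def w_def by (simp add: field_simps)
  finally show ?thesis unfolding A_def by simp
qed

lemma sum_ereal_mult_eq:
  assumes "\<And>k. k \<in> S \<Longrightarrow> a k \<noteq> 0 \<Longrightarrow> X k = ereal (x k)"
  shows "(\<Sum>k\<in>S. ereal (a k) * X k) = ereal (\<Sum>k\<in>S. a k * x k)"
proof -
  have "(\<Sum>k\<in>S. ereal (a k) * X k) = (\<Sum>k\<in>S. ereal (a k * x k))"
  proof (rule sum.cong)
    fix k assume "k \<in> S"
    then show "ereal (a k) * X k = ereal (a k * x k)"
      using assms by (cases "a k = 0") (simp_all add: zero_ereal_def[symmetric])
  qed simp
  then show ?thesis by simp
qed

section \<open>The stochastic proximal gradient algorithm\<close>

locale stochastic_prox_grad = convex_composite g f gradf L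
  for g :: "'a::euclidean_space \<Rightarrow> ereal" and f gradf L +
  fixes M :: "'b measure" and \<gamma> :: "nat \<Rightarrow> real" and \<theta> H :: "nat \<Rightarrow> 'b \<Rightarrow> 'a"
    and B :: real and \<theta>s :: 'a
  assumes prob: "prob_space M"
    and \<gamma>_pos: "\<And>k. 1 \<le> k \<Longrightarrow> 0 < \<gamma> k" and \<gamma>_le: "\<And>k. 1 \<le> k \<Longrightarrow> \<gamma> k \<le> 1 / L"
    and \<theta>0_meas: "\<theta> 0 \<in> borel_measurable M"
    and H_meas: "\<And>k. 1 \<le> k \<Longrightarrow> H k \<in> borel_measurable M"
    and H_int: "\<And>k. 1 \<le> k \<Longrightarrow> integrable M (H k)"
    and iter: "\<And>k \<omega>. \<omega> \<in> space M \<Longrightarrow>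
      \<theta> (Suc k) \<omega> \<in> Prox g (\<gamma> (Suc k)) (\<theta> k \<omega> - \<gamma> (Suc k) *\<^sub>R H (Suc k) \<omega>)"
    and bounded: "AE \<omega> in M. \<forall>k. norm (\<theta> k \<omega>) \<le> B"
    and \<theta>s_min: "\<forall>y. ereal (f \<theta>s) + g \<theta>s \<le> ereal (f y) + g y"
begin

sublocale prob_space M by (rule prob)

abbreviation \<F> :: "nat \<Rightarrow> 'b measure" where
  "\<F> \<equiv> nat_filtration M (\<theta> 0) H"

definition noise :: "nat \<Rightarrow> 'b \<Rightarrow> 'a" where
  "noise j \<omega> = H (Suc j) \<omega> - gradf (\<theta> j \<omega>)"

definition exact_step :: "nat \<Rightarrow> 'b \<Rightarrow> 'a" where
  "exact_step j \<omega> = prox (\<gamma> (Suc j)) (\<theta> j \<omega> - \<gamma> (Suc j) *\<^sub>R gradf (\<theta> j \<omega>))"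

definition sqdist :: "nat \<Rightarrow> 'b \<Rightarrow> real" where
  "sqdist j \<omega> = (norm (\<theta> j \<omega> - \<theta>s))\<^sup>2"

definition Bs :: real where
  "Bs = B + norm \<theta>s"

lemma \<gamma>_Suc: "0 < \<gamma> (Suc j)" "\<gamma> (Suc j) \<le> 1 / L"
  using \<gamma>_pos \<gamma>_le by auto

lemma Bs_nonneg: "0 \<le> Bs"
proof -
  have "AE \<omega> in M. 0 \<le> B" using bounded by eventually_elim (meson norm_ge_zero order_trans)
  then show ?thesis unfolding Bs_def by (simp add: add_nonneg_nonneg)
qed

lemma g_\<theta>s_not_PInf: "g \<theta>s \<noteq> \<infinity>"
  by (rule minimizer_not_PInf[OF \<theta>s_min])

lemma subalgebra_\<F>: "subalgebra M (\<F> k)"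
  by (rule subalgebra_nat_filtration) (use \<theta>0_meas H_meas in auto)

lemma sigma_finite_subalgebra_\<F>: "sigma_finite_subalgebra M (\<F> k)"
  using subalgebra_\<F>
  by (intro finite_measure_subalgebra_is_sigma_finite)
    (simp add: finite_measure_subalgebra_def finite_measure_subalgebra_axioms_def finite_measure_axioms)

lemma \<theta>_measurable_\<F>: "\<theta> k \<in> borel_measurable (\<F> k)"
proof (induction k)
  case 0
  show ?case by (rule measurable_nat_filtration_initial)
next
  case (Suc k)
  have [measurable]: "\<theta> k \<in> borel_measurable (\<F> (Suc k))"
    by (rule measurable_from_subalg[OF nat_filtration_mono Suc.IH]) simp
  have [measurable]: "H (Suc k) \<in> borel_measurable (\<F> (Suc k))"
    by (rule measurable_nat_filtration) auto
  have "continuous_on UNIV (\<lambda>x. prox (\<gamma> (Suc k)) (fst x - \<gamma> (Suc k) *\<^sub>R snd x))"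
    by (intro continuous_on_compose2[OF continuous_on_prox[OF \<gamma>_Suc(1)]] continuous_intros) auto
  then have "(\<lambda>\<omega>. prox (\<gamma> (Suc k)) (\<theta> k \<omega> - \<gamma> (Suc k) *\<^sub>R H (Suc k) \<omega>)) \<in> borel_measurable (\<F> (Suc k))"
    by (rule borel_measurable_continuous_Pair[rotated 2]) measurable
  moreover have "\<theta> (Suc k) \<omega> = prox (\<gamma> (Suc k)) (\<theta> k \<omega> - \<gamma> (Suc k) *\<^sub>R H (Suc k) \<omega>)"
    if "\<omega> \<in> space (\<F> (Suc k))" for \<omega>
    using that prox_eq[OF \<gamma>_Suc(1) iter] by simp
  ultimately show ?case by (metis (no_types, lifting) measurable_cong)
qed

lemma \<theta>_measurable [measurable]: "\<theta> k \<in> borel_measurable M"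
  by (rule measurable_from_subalg[OF subalgebra_\<F> \<theta>_measurable_\<F>])

lemma gradf_measurable [measurable]: "gradf \<in> borel_measurable borel"
  by (rule borel_measurable_continuous_onI[OF continuous_on_gradf])

lemma exact_step_measurable_\<F>: "exact_step j \<in> borel_measurable (\<F> j)"
proof -
  have [measurable]: "\<theta> j \<in> borel_measurable (\<F> j)" "prox (\<gamma> (Suc j)) \<in> borel_measurable borel"
    using \<theta>_measurable_\<F> borel_measurable_continuous_onI[OF continuous_on_prox[OF \<gamma>_Suc(1)]] .
  show ?thesis unfolding exact_step_def by measurable
qed

lemma noise_measurable [measurable]: "noise j \<in> borel_measurable M"
  using H_meas[of "Suc j"] unfolding noise_def by measurable

lemma sqdist_measurable [measurable]: "sqdist j \<in> borel_measurable M"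
  unfolding sqdist_def by measurable

lemma objective_measurable [measurable]: "(\<lambda>\<omega>. F (\<theta> k \<omega>)) \<in> borel_measurable M"
proof -
  have [measurable]: "f \<in> borel_measurable borel" "g \<in> borel_measurable borel"
    using borel_measurable_continuous_onI[OF continuous_on_f] borel_measurable_lsc[OF g_lsc] .
  show ?thesis unfolding F_def by measurable
qed

lemma AE_dist_minimizer_le: "AE \<omega> in M. norm (\<theta> j \<omega> - \<theta>s) \<le> Bs"
  using bounded
proof eventually_elim
  case (elim \<omega>)
  then show ?case
    using norm_triangle_ineq4[of "\<theta> j \<omega>" \<theta>s] elim[rule_format, of j] unfolding Bs_def by linarith
qed

lemma AE_sqdist_le: "AE \<omega> in M. sqdist j \<omega> \<le> Bs\<^sup>2"
  using AE_dist_minimizer_le[of j] by eventually_elim (auto simp: sqdist_def intro: power_mono)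

lemma AE_exact_step_dist_le: "AE \<omega> in M. norm (\<theta>s - exact_step j \<omega>) \<le> Bs"
  using AE_dist_minimizer_le[of j]
proof eventually_elim
  case (elim \<omega>)
  have "norm (exact_step j \<omega> - \<theta>s) \<le> norm (\<theta> j \<omega> - \<theta>s)"
    unfolding exact_step_def by (rule prox_grad_step_toward_minimizer[OF \<gamma>_Suc \<theta>s_min])
  then show ?case using elim by (simp add: norm_minus_commute)
qed

lemma pathwise_step:
  assumes "\<omega> \<in> space M"
  shows "F (\<theta> (Suc j) \<omega>) \<le> F \<theta>s + (sqdist j \<omega> - sqdist (Suc j) \<omega>) / (2 * \<gamma> (Suc j))
           + (\<theta>s - exact_step j \<omega>) \<bullet> noise j \<omega> + \<gamma> (Suc j) * (norm (noise j \<omega>))\<^sup>2"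
  using stochastic_prox_grad_step[OF \<gamma>_Suc iter[OF assms] g_\<theta>s_not_PInf]
  by (simp add: sqdist_def exact_step_def noise_def diff_divide_distrib)

lemma ereal_objective_iterate:
  "\<omega> \<in> space M \<Longrightarrow> ereal (f (\<theta> (Suc j) \<omega>)) + g (\<theta> (Suc j) \<omega>) = ereal (F (\<theta> (Suc j) \<omega>))"
  by (rule ereal_F[OF Prox_not_PInf[OF iter]])

lemma objective_iterate_ge: "\<omega> \<in> space M \<Longrightarrow> F \<theta>s \<le> F (\<theta> (Suc j) \<omega>)"
  using \<theta>s_min[rule_format, of "\<theta> (Suc j) \<omega>"] ereal_objective_iterate ereal_F[OF g_\<theta>s_not_PInf] by simp

lemma integrable_noise: "integrable M (noise j)"
proof -
  have "AE \<omega> in M. norm (gradf (\<theta> j \<omega>)) \<le> norm (gradf 0) + L * B"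
    using bounded
  proof eventually_elim
    case (elim \<omega>)
    have "norm (gradf (\<theta> j \<omega>)) \<le> norm (gradf 0) + norm (gradf (\<theta> j \<omega>) - gradf 0)"
      by (rule norm_triangle_sub)
    also have "norm (gradf (\<theta> j \<omega>) - gradf 0) \<le> L * norm (\<theta> j \<omega>)"
      using gradf_lip[rule_format, of "\<theta> j \<omega>" 0] by simp
    also have "\<dots> \<le> L * B" using elim L_pos by (intro mult_left_mono) auto
    finally show ?case by simp
  qed
  then have "integrable M (\<lambda>\<omega>. gradf (\<theta> j \<omega>))" by (intro integrable_const_bound) measurable
  then show ?thesis
    unfolding noise_def using H_int[of "Suc j"] by (intro Bochner_Integration.integrable_diff) auto
qed

lemma integrable_sqdist: "integrable M (sqdist j)"
  using AE_sqdist_le[of j] by (intro integrable_const_bound[where B = "Bs\<^sup>2"]) (auto simp: sqdist_def)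

lemma integral_sqdist_bounds: "0 \<le> (\<integral>\<omega>. sqdist j \<omega> \<partial>M)" "(\<integral>\<omega>. sqdist j \<omega> \<partial>M) \<le> Bs\<^sup>2"
proof -
  show "0 \<le> (\<integral>\<omega>. sqdist j \<omega> \<partial>M)" by (rule integral_nonneg_AE) (simp add: sqdist_def)
  have "(\<integral>\<omega>. sqdist j \<omega> \<partial>M) \<le> (\<integral>\<omega>. Bs\<^sup>2 \<partial>M)"
    by (rule integral_mono_AE[OF integrable_sqdist _ AE_sqdist_le]) simp
  then show "(\<integral>\<omega>. sqdist j \<omega> \<partial>M) \<le> Bs\<^sup>2" by (simp add: prob_space)
qed

lemma integrable_inner_noise: "integrable M (\<lambda>\<omega>. (\<theta>s - exact_step j \<omega>) \<bullet> noise j \<omega>)"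
proof (rule Bochner_Integration.integrable_bound)
  show "integrable M (\<lambda>\<omega>. Bs * norm (noise j \<omega>))" using integrable_noise by auto
  have [measurable]: "exact_step j \<in> borel_measurable M"
    by (rule measurable_from_subalg[OF subalgebra_\<F> exact_step_measurable_\<F>])
  show "(\<lambda>\<omega>. (\<theta>s - exact_step j \<omega>) \<bullet> noise j \<omega>) \<in> borel_measurable M" by measurable
  show "AE \<omega> in M. norm ((\<theta>s - exact_step j \<omega>) \<bullet> noise j \<omega>) \<le> norm (Bs * norm (noise j \<omega>))"
    using AE_exact_step_dist_le[of j]
  proof eventually_elim
    case (elim \<omega>)
    have "\<bar>(\<theta>s - exact_step j \<omega>) \<bullet> noise j \<omega>\<bar> \<le> norm (\<theta>s - exact_step j \<omega>) * norm (noise j \<omega>)"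
      by (rule Cauchy_Schwarz_ineq2)
    also have "\<dots> \<le> Bs * norm (noise j \<omega>)" using elim by (rule mult_right_mono) simp
    finally show ?case using Bs_nonneg by simp
  qed
qed

text \<open>\<open>bias j\<close> and \<open>moment j\<close> are the expectations of \<open>\<epsilon>\<^sup>(\<^sup>1\<^sup>)\<^sub>j\<close> and (by the tower property)
  of \<open>\<epsilon>\<^sup>(\<^sup>2\<^sup>)\<^sub>j\<close>.\<close>
definition bias :: "nat \<Rightarrow> real" where
  "bias j = (\<integral>\<omega>. norm (vcond_exp M (\<F> j) (noise j) \<omega>) \<partial>M)"

definition moment :: "nat \<Rightarrow> ennreal" where
  "moment j = (\<integral>\<^sup>+\<omega>. ennreal ((norm (noise j \<omega>))\<^sup>2) \<partial>M)"

lemma integral_inner_noise_le: "(\<integral>\<omega>. (\<theta>s - exact_step j \<omega>) \<bullet> noise j \<omega> \<partial>M) \<le> Bs * bias j"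
  unfolding bias_def
  using exact_step_measurable_\<F>[of j] AE_exact_step_dist_le[of j] integrable_noise[of j]
  by (intro sigma_finite_subalgebra.integral_inner_le_vcond_exp[OF sigma_finite_subalgebra_\<F>]) auto

lemma expected_step:
  assumes "moment j \<noteq> \<infinity>"
  shows "integrable M (\<lambda>\<omega>. F (\<theta> (Suc j) \<omega>))"
    and "(\<integral>\<omega>. F (\<theta> (Suc j) \<omega>) \<partial>M) \<le> F \<theta>s
          + ((\<integral>\<omega>. sqdist j \<omega> \<partial>M) - (\<integral>\<omega>. sqdist (Suc j) \<omega> \<partial>M)) / (2 * \<gamma> (Suc j))
          + Bs * bias j + \<gamma> (Suc j) * enn2real (moment j)"
proof -
  have sq_int: "integrable M (\<lambda>\<omega>. (norm (noise j \<omega>))\<^sup>2)"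
    using assms
    by (intro integrableI_nn_integral_finite[where x = "enn2real (moment j)"]) (auto simp: moment_def less_top)
  have moment: "enn2real (moment j) = (\<integral>\<omega>. (norm (noise j \<omega>))\<^sup>2 \<partial>M)"
    unfolding moment_def by (subst nn_integral_eq_integral[OF sq_int]) auto
  define R where "R \<omega> = F \<theta>s + (sqdist j \<omega> - sqdist (Suc j) \<omega>) / (2 * \<gamma> (Suc j))
           + (\<theta>s - exact_step j \<omega>) \<bullet> noise j \<omega> + \<gamma> (Suc j) * (norm (noise j \<omega>))\<^sup>2" for \<omega>
  have R_int: "integrable M R"
    unfolding R_def using sq_int integrable_sqdist integrable_inner_noise by auto
  show F_int: "integrable M (\<lambda>\<omega>. F (\<theta> (Suc j) \<omega>))"
  proof (rule Bochner_Integration.integrable_bound)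
    show "integrable M (\<lambda>\<omega>. \<bar>F \<theta>s\<bar> + \<bar>R \<omega>\<bar>)" using R_int by auto
    show "AE \<omega> in M. norm (F (\<theta> (Suc j) \<omega>)) \<le> norm (\<bar>F \<theta>s\<bar> + \<bar>R \<omega>\<bar>)"
    proof (rule AE_I2)
      fix \<omega> assume "\<omega> \<in> space M"
      then have "F \<theta>s \<le> F (\<theta> (Suc j) \<omega>)" "F (\<theta> (Suc j) \<omega>) \<le> R \<omega>"
        using objective_iterate_ge pathwise_step unfolding R_def by auto
      then show "norm (F (\<theta> (Suc j) \<omega>)) \<le> norm (\<bar>F \<theta>s\<bar> + \<bar>R \<omega>\<bar>)" by simp
    qed
  qed measurable
  have "(\<integral>\<omega>. F (\<theta> (Suc j) \<omega>) \<partial>M) \<le> (\<integral>\<omega>. R \<omega> \<partial>M)"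
    by (intro integral_mono_AE[OF F_int R_int] AE_I2) (simp add: R_def pathwise_step)
  also have "\<dots> = F \<theta>s + ((\<integral>\<omega>. sqdist j \<omega> \<partial>M) - (\<integral>\<omega>. sqdist (Suc j) \<omega> \<partial>M)) / (2 * \<gamma> (Suc j))
          + (\<integral>\<omega>. (\<theta>s - exact_step j \<omega>) \<bullet> noise j \<omega> \<partial>M) + \<gamma> (Suc j) * enn2real (moment j)"
    unfolding R_def moment using sq_int integrable_sqdist integrable_inner_noise by (simp add: prob_space)
  finally show "(\<integral>\<omega>. F (\<theta> (Suc j) \<omega>) \<partial>M) \<le> F \<theta>s
          + ((\<integral>\<omega>. sqdist j \<omega> \<partial>M) - (\<integral>\<omega>. sqdist (Suc j) \<omega> \<partial>M)) / (2 * \<gamma> (Suc j))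
          + Bs * bias j + \<gamma> (Suc j) * enn2real (moment j)"
    using integral_inner_noise_le[of j] by linarith
qed

lemma expectation_objective_iterate:
  assumes "moment j \<noteq> \<infinity>"
  shows "ereal_expectation M (\<lambda>\<omega>. ereal (f (\<theta> (Suc j) \<omega>)) + g (\<theta> (Suc j) \<omega>))
    = ereal (\<integral>\<omega>. F (\<theta> (Suc j) \<omega>) \<partial>M)"
  by (rule ereal_expectation_eq_integral[OF expected_step(1)[OF assms] ereal_objective_iterate])

lemma enn2ereal_nn_integral_bias:
  "enn2ereal (\<integral>\<^sup>+\<omega>. ennreal (norm (vcond_exp M (\<F> j) (noise j) \<omega>)) \<partial>M) = ereal (bias j)"
proof -
  have "integrable M (\<lambda>\<omega>. norm (vcond_exp M (\<F> j) (noise j) \<omega>))"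
    using sigma_finite_subalgebra.integrable_vcond_exp[OF sigma_finite_subalgebra_\<F> integrable_noise]
    by (rule integrable_norm)
  then show ?thesis unfolding bias_def by (subst nn_integral_eq_integral) auto
qed

lemma nn_integral_cond_moment:
  "(\<integral>\<^sup>+\<omega>. nn_cond_exp M (\<F> j) (\<lambda>\<omega>. ennreal ((norm (noise j \<omega>))\<^sup>2)) \<omega> \<partial>M) = moment j"
  unfolding moment_def by (rule sigma_finite_subalgebra.nn_integral_nn_cond_exp[OF sigma_finite_subalgebra_\<F>]) simp

lemma averaged_gap_le_real:
  fixes a :: "nat \<Rightarrow> real"
  assumes n: "1 \<le> n" and A: "0 < (\<Sum>k=1..n. a k)"
    and a: "\<And>k. 1 \<le> k \<Longrightarrow> 0 \<le> a k" and mono: "\<And>k. 1 \<le> k \<Longrightarrow> a k / \<gamma> k \<le> a (Suc k) / \<gamma> (Suc k)"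
    and finite: "\<And>k. 1 \<le> k \<Longrightarrow> k \<le> n \<Longrightarrow> 0 < a k \<Longrightarrow> moment (k - 1) \<noteq> \<infinity>"
  shows "1 / (\<Sum>k=1..n. a k) * (\<Sum>k=1..n. a k * (\<integral>\<omega>. F (\<theta> k \<omega>) \<partial>M)) - F \<theta>s
    \<le> Bs\<^sup>2 * a n / (2 * \<gamma> n * (\<Sum>k=1..n. a k))
      + 1 / (\<Sum>k=1..n. a k) * (\<Sum>k=1..n. a k * (Bs * bias (k - 1) + \<gamma> k * enn2real (moment (k - 1))))"
proof (rule weighted_average_le[where d = "\<lambda>j. \<integral>\<omega>. sqdist j \<omega> \<partial>M",
      OF n A a \<gamma>_pos mono integral_sqdist_bounds])
  fix k assume k: "1 \<le> k" "k \<le> n" "0 < a k"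
  then obtain j where "k = Suc j" by (cases k) auto
  then show "(\<integral>\<omega>. F (\<theta> k \<omega>) \<partial>M) \<le> F \<theta>s
      + ((\<integral>\<omega>. sqdist (k - 1) \<omega> \<partial>M) - (\<integral>\<omega>. sqdist k \<omega> \<partial>M)) / (2 * \<gamma> k)
      + (Bs * bias (k - 1) + \<gamma> k * enn2real (moment (k - 1)))"
    using expected_step(2)[OF finite[OF k]] by simp
qed

lemma averaged_gap_le:
  fixes a :: "nat \<Rightarrow> real"
  assumes n: "1 \<le> n" and A: "0 < (\<Sum>k=1..n. a k)"
    and a: "\<And>k. 1 \<le> k \<Longrightarrow> 0 \<le> a k" and mono: "\<And>k. 1 \<le> k \<Longrightarrow> a k / \<gamma> k \<le> a (Suc k) / \<gamma> (Suc k)"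
  shows "ereal (1 / (\<Sum>k=1..n. a k)) * (\<Sum>k=1..n. ereal (a k) *
        ereal_expectation M (\<lambda>\<omega>. ereal (f (\<theta> k \<omega>)) + g (\<theta> k \<omega>))) - ereal (F \<theta>s)
    \<le> ereal (Bs\<^sup>2 * a n / (2 * \<gamma> n * (\<Sum>k=1..n. a k)))
      + ereal (1 / (\<Sum>k=1..n. a k)) * (\<Sum>k=1..n. ereal (a k) *
        (ereal (Bs * bias (k - 1)) + ereal (\<gamma> k) * enn2ereal (moment (k - 1))))"
proof (cases "\<exists>k\<in>{1..n}. 0 < a k \<and> moment (k - 1) = \<infinity>")
  case True
  then obtain k where k: "k \<in> {1..n}" "0 < a k" "moment (k - 1) = \<infinity>" by blast
  then have "ereal (a k) * (ereal (Bs * bias (k - 1)) + ereal (\<gamma> k) * enn2ereal (moment (k - 1))) = \<infinity>"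
    using \<gamma>_pos[of k] by simp
  then have "(\<Sum>k=1..n. ereal (a k) * (ereal (Bs * bias (k - 1)) + ereal (\<gamma> k) * enn2ereal (moment (k - 1)))) = \<infinity>"
    using k(1) unfolding sum_Pinfty by auto
  then show ?thesis using A by simp
next
  case False
  then have finite: "moment (k - 1) \<noteq> \<infinity>" if "k \<in> {1..n}" "a k \<noteq> 0" for k
    using that a[of k] by force
  have "(\<Sum>k=1..n. ereal (a k) * ereal_expectation M (\<lambda>\<omega>. ereal (f (\<theta> k \<omega>)) + g (\<theta> k \<omega>)))
      = ereal (\<Sum>k=1..n. a k * (\<integral>\<omega>. F (\<theta> k \<omega>) \<partial>M))"
  proof (rule sum_ereal_mult_eq)
    fix k assume k: "k \<in> {1..n}" "a k \<noteq> 0"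
    then obtain j where "k = Suc j" by (cases k) auto
    then show "ereal_expectation M (\<lambda>\<omega>. ereal (f (\<theta> k \<omega>)) + g (\<theta> k \<omega>)) = ereal (\<integral>\<omega>. F (\<theta> k \<omega>) \<partial>M)"
      using expectation_objective_iterate finite[OF k] by simp
  qed
  moreover have "(\<Sum>k=1..n. ereal (a k) * (ereal (Bs * bias (k - 1)) + ereal (\<gamma> k) * enn2ereal (moment (k - 1))))
      = ereal (\<Sum>k=1..n. a k * (Bs * bias (k - 1) + \<gamma> k * enn2real (moment (k - 1))))"
    using finite by (intro sum_ereal_mult_eq) (auto simp: enn2ereal_eq_ereal_enn2real)
  ultimately show ?thesis
    using averaged_gap_le_real[OF n A a mono] finite by simp
qed

end

theorem corollary7:
  fixes f :: "'a::euclidean_space \<Rightarrow> real" and g :: "'a \<Rightarrow> ereal"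
    and gradf :: "'a \<Rightarrow> 'a" and L :: real
    and M :: "'b measure"
    and \<gamma> a :: "nat \<Rightarrow> real"
    and \<theta> H :: "nat \<Rightarrow> 'b \<Rightarrow> 'a"
    and B :: real and \<theta>s :: 'a and n :: nat
  assumes prob: "prob_space M"
    \<comment> \<open>(H1)\<close>
    and g_proper: "\<exists>x. g x \<noteq> \<infinity>" and g_not_minf: "\<forall>x. g x \<noteq> -\<infinity>"
    and g_convex: "ereal_convex g" and g_lsc: "lsc g"
    and f_grad: "\<forall>x. (f has_derivative (\<lambda>h. gradf x \<bullet> h)) (at x)"
    and gradf_cont: "continuous_on UNIV gradf"
    and L_pos: "0 < L"
    and gradf_lip: "\<forall>x y. norm (gradf x - gradf y) \<le> L * norm (x - y)"
    \<comment> \<open>(H2)\<close>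
    and f_convex: "convex_on UNIV f"
    and argmin_ne: "\<exists>x. \<forall>y. ereal (f x) + g x \<le> ereal (f y) + g y"
    \<comment> \<open>stepsizes\<close>
    and \<gamma>_pos: "\<forall>k\<ge>1. 0 < \<gamma> k \<and> \<gamma> k \<le> 1 / L"
    and \<gamma>_noninc: "\<forall>k\<ge>1. \<gamma> (Suc k) \<le> \<gamma> k"
    \<comment> \<open>random iterates\<close>
    and \<theta>0_meas: "\<theta> 0 \<in> borel_measurable M"
    and \<theta>0_dom: "\<forall>\<omega>\<in>space M. \<theta> 0 \<omega> \<in> Dom g"
    and H_meas: "\<forall>k\<ge>1. H k \<in> borel_measurable M"
    and H_int: "\<forall>k\<ge>1. integrable M (H k)"
    and iter: "\<forall>k. \<forall>\<omega>\<in>space M. \<theta> (Suc k) \<omega> \<in> Prox g (\<gamma> (Suc k)) (\<theta> k \<omega> - \<gamma> (Suc k) *\<^sub>R H (Suc k) \<omega>)"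
    \<comment> \<open>weights\<close>
    and a_nonneg: "\<forall>k\<ge>1. 0 \<le> a k"
    and a_over_\<gamma>_mono: "\<forall>k\<ge>1. a k / \<gamma> k \<le> a (Suc k) / \<gamma> (Suc k)"
    \<comment> \<open>boundedness\<close>
    and bounded: "AE \<omega> in M. \<forall>k. norm (\<theta> k \<omega>) \<le> B"
    \<comment> \<open>minimizer and index\<close>
    and \<theta>s_min: "\<forall>y. ereal (f \<theta>s) + g \<theta>s \<le> ereal (f y) + g y"
    and n_ge: "1 \<le> n"
    and A_pos: "0 < (\<Sum>k=1..n. a k)"
  shows
    "(let A = (\<Sum>k=1..n. a k);
          Bs = B + norm \<theta>s;
          \<F> = nat_filtration M (\<theta> 0) H;
          \<eta> = (\<lambda>k \<omega>. H (Suc k) \<omega> - gradf (\<theta> k \<omega>));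
          \<epsilon>1 = (\<lambda>k \<omega>. norm (vcond_exp M (\<F> k) (\<eta> k) \<omega>));
          \<epsilon>2 = (\<lambda>k. nn_cond_exp M (\<F> k) (\<lambda>\<omega>. ennreal ((norm (\<eta> k \<omega>))\<^sup>2)))
      in ereal (1 / A) * (\<Sum>k=1..n. ereal (a k) *
             ereal_expectation M (\<lambda>\<omega>. ereal (f (\<theta> k \<omega>)) + g (\<theta> k \<omega>)))
           - (ereal (f \<theta>s) + g \<theta>s)
         \<le> ereal (Bs\<^sup>2 * a n / (2 * \<gamma> n * A))
           + ereal (1 / A) * (\<Sum>k=1..n. ereal (a k) *
               (ereal Bs * enn2ereal (\<integral>\<^sup>+\<omega>. ennreal (\<epsilon>1 (k - 1) \<omega>) \<partial>M)
                + ereal (\<gamma> k) * enn2ereal (\<integral>\<^sup>+\<omega>. \<epsilon>2 (k - 1) \<omega> \<partial>M))))"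
proof -
  interpret convex_composite g f gradf L
    by unfold_locales (fact g_proper g_not_minf g_convex f_grad L_pos gradf_lip f_convex g_lsc)+
  interpret stochastic_prox_grad g f gradf L M \<gamma> \<theta> H B \<theta>s
  proof (intro stochastic_prox_grad.intro stochastic_prox_grad_axioms.intro)
    show "0 < \<gamma> k" "\<gamma> k \<le> 1 / L" if "1 \<le> k" for k using \<gamma>_pos that by auto
    show "H k \<in> borel_measurable M" "integrable M (H k)" if "1 \<le> k" for k
      using H_meas H_int that by auto
    show "\<theta> (Suc k) \<omega> \<in> Prox g (\<gamma> (Suc k)) (\<theta> k \<omega> - \<gamma> (Suc k) *\<^sub>R H (Suc k) \<omega>)"
      if "\<omega> \<in> space M" for k \<omega> using iter that by blast
  qed (fact convex_composite_axioms prob \<theta>0_meas bounded \<theta>s_min)+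
  have noise: "(\<lambda>\<omega>. H (Suc j) \<omega> - gradf (\<theta> j \<omega>)) = noise j" for j
    by (simp add: fun_eq_iff noise_def)
  show ?thesis
    using averaged_gap_le[OF n_ge A_pos] a_nonneg a_over_\<gamma>_mono
    unfolding Let_def noise enn2ereal_nn_integral_bias nn_integral_cond_moment
    by (simp add: Bs_def ereal_F[OF g_\<theta>s_not_PInf])
qed

end
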